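(* For every $d\ge0$ there exists $\beta=\beta(d)$ such that for all integers $n\ge \max(1,d)$ and $k\ge 2$, and every $\delta\ge 1+1/\ln k$ such that $\delta k$ is an integer, if $G_n\sim G(n,d/n)$ then $$\Pr\big[s_k(G_n,\delta k)\ge \beta^k\big]\le 2^{-k}.$$
   Context: $G(n,p)$ is the random graph on $[n]$ with each edge present independently with probability $p$. For a graph $G$, $k\ge1$ and $j\ge0$, $s_k(G,j)$ is the number of unlabeled (isomorphism classes of) subgraphs of $G$ with exactly $k$ vertices and $j$ edges. *)

theory Defs
  imports "HOL-Probability.Probability"
begin

text \<open>Vertex set [n] = {1..n}; a graph on [n] is given by its edge set,
  a set of 2-element subsets of [n].\<close>

definition all_pairs :: "nat \<Rightarrow> nat set set" where
  "all_pairs n = {e. e \<subseteq> {1..n} \<and> card e = 2}"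

definition gnp :: "nat \<Rightarrow> real \<Rightarrow> nat set set pmf" where
  "gnp n p = map_pmf (\<lambda>f. {e \<in> all_pairs n. f e})
                     (Pi_pmf (all_pairs n) False (\<lambda>_. bernoulli_pmf p))"

definition subgraphs_kj :: "nat \<Rightarrow> nat set set \<Rightarrow> nat \<Rightarrow> nat \<Rightarrow> (nat set \<times> nat set set) set" where
  "subgraphs_kj n E k j = {(W, F). W \<subseteq> {1..n} \<and> card W = k \<and> F \<subseteq> E \<and>
       (\<forall>e\<in>F. e \<subseteq> W) \<and> card F = j}"

definition graph_iso :: "(nat set \<times> nat set set) \<Rightarrow> (nat set \<times> nat set set) \<Rightarrow> bool" where
  "graph_iso H H' = (\<exists>f. bij_betw f (fst H) (fst H') \<and> (\<lambda>e. f ` e) ` (snd H) = snd H')"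

definition s_count :: "nat \<Rightarrow> nat set set \<Rightarrow> nat \<Rightarrow> nat \<Rightarrow> nat" where
  "s_count n E k j = card (subgraphs_kj n E k j //
      {(H, H'). H \<in> subgraphs_kj n E k j \<and> H' \<in> subgraphs_kj n E k j \<and> graph_iso H H'})"

end

theory Submission
  imports Defs
begin

text \<open>A first-moment argument. Every isomorphism class of k-vertex, j-edge subgraphs of G
  contains a labelled copy, so s_k(G,j) is at most the number of pairs (W, F) with
  |W| = k, F a j-set of pairs inside W and F \<subseteq> E(G). Its expectation in G(n,d/n) is
  C(n,k) C(C(k,2),j) (d/n)^j, which for j \<ge> k \<le> n is at most
  (k^k/k!) ((dk/2)^j/j!) \<le> e^k e^(dk/2). Markov's inequality with threshold
  (2 e^(1+d/2))^k then gives probability at most 2^-k.\<close>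

lemma power_div_fact_le_exp:
  fixes x :: real
  assumes "0 \<le> x"
  shows "x ^ m / fact m \<le> exp x"
proof -
  have "(\<Sum>i\<in>{m}. x ^ i /\<^sub>R fact i) \<le> (\<Sum>i. x ^ i /\<^sub>R fact i)"
    using assms by (intro sum_le_suminf summable_exp_generic) auto
  then show ?thesis
    by (simp add: exp_def divide_inverse ac_simps)
qed

lemma binomial_le_power_div_fact: "real (n choose k) \<le> real n ^ k / fact k"
proof (cases "k \<le> n")
  case True
  have "(n choose k) * fact k = (fact n :: nat) div fact (n - k)"
    using binomial_fact_lemma[OF True]
    by (metis mult.assoc mult.commute nonzero_mult_div_cancel_left fact_nonzero)
  also have "\<dots> \<le> n ^ k"
    using fact_div_fact_le_pow[OF True] .
  finally have "real (n choose k) * fact k \<le> real n ^ k"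
    by (metis of_nat_fact of_nat_le_iff of_nat_mult of_nat_power)
  then show ?thesis
    by (simp add: field_simps)
qed (simp add: binomial_eq_0)

lemma first_moment_le_exp:
  fixes d :: real
  assumes "0 < k" "k \<le> j" "0 \<le> d"
  shows "real (n choose k) * real ((k choose 2) choose j) * (d / real n) ^ j
         \<le> exp (real k * (1 + d / 2))"
proof (cases "k \<le> n")
  case False
  then show ?thesis
    by (simp add: binomial_eq_0)
next
  case True
  obtain m where j: "j = k + m"
    using \<open>k \<le> j\<close> le_Suc_ex by blast
  have k0: "real k > 0" and n0: "real n > 0"
    using assms True by auto
  have pairs: "real ((k choose 2) choose j) \<le> (real k ^ 2 / 2) ^ j / fact j"
  proof -
    have "real ((k choose 2) choose j) \<le> real (k choose 2) ^ j / fact j"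
      by (rule binomial_le_power_div_fact)
    also have "\<dots> \<le> (real k ^ 2 / fact 2) ^ j / fact j"
      by (intro divide_right_mono power_mono binomial_le_power_div_fact) auto
    finally show ?thesis
      by (simp add: numeral_2_eq_2)
  qed
  have "real n ^ k * (d / real n) ^ j = d ^ j / real n ^ m"
    using n0 by (simp add: j power_add power_divide)
  also have "\<dots> \<le> d ^ j / real k ^ m"
    using assms True k0 by (intro divide_left_mono power_mono mult_pos_pos) auto
  finally have density: "real n ^ k * (d / real n) ^ j \<le> d ^ j / real k ^ m" .
  have "real (n choose k) * real ((k choose 2) choose j) * (d / real n) ^ j
        \<le> (real n ^ k / fact k) * ((real k ^ 2 / 2) ^ j / fact j) * (d / real n) ^ j"
    using binomial_le_power_div_fact pairs assms
    by (intro mult_right_mono mult_mono) auto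
  also have "\<dots> = (real n ^ k * (d / real n) ^ j) * (real k ^ 2 / 2) ^ j / (fact k * fact j)"
    by simp
  also have "\<dots> \<le> (d ^ j / real k ^ m) * (real k ^ 2 / 2) ^ j / (fact k * fact j)"
    using density by (intro divide_right_mono mult_right_mono) auto
  also have "\<dots> = (real k ^ k / fact k) * ((d * real k / 2) ^ j / fact j)"
    using k0 by (simp add: j power_add power_mult_distrib power_divide power2_eq_square field_simps)
  also have "\<dots> \<le> exp (real k) * exp (d * real k / 2)"
    using assms by (intro mult_mono power_div_fact_le_exp) auto
  also have "\<dots> = exp (real k * (1 + d / 2))"
    by (simp add: exp_add[symmetric] algebra_simps)
  finally show ?thesis .
qed

definition labelled_subgraphs :: "nat \<Rightarrow> nat \<Rightarrow> nat \<Rightarrow> (nat set \<times> nat set set) set" where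
  "labelled_subgraphs n k j =
     {(W, F). W \<subseteq> {1..n} \<and> card W = k \<and> F \<subseteq> {e. e \<subseteq> W \<and> card e = 2} \<and> card F = j}"

lemma finite_labelled_subgraphs: "finite (labelled_subgraphs n k j)"
  by (rule finite_subset[of _ "Pow {1..n} \<times> Pow (Pow {1..n})"]) (auto simp: labelled_subgraphs_def)

lemma card_labelled_subgraphs:
  "card (labelled_subgraphs n k j) = (n choose k) * ((k choose 2) choose j)"
proof -
  let ?A = "{W. W \<subseteq> {1..n} \<and> card W = k}"
  let ?B = "\<lambda>W::nat set. {F. F \<subseteq> {e. e \<subseteq> W \<and> card e = 2} \<and> card F = j}"
  have eq: "labelled_subgraphs n k j = Sigma ?A ?B"
    by (auto simp: labelled_subgraphs_def)
  have card_B: "card (?B W) = (k choose 2) choose j" and finite_B: "finite (?B W)"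
    if "W \<in> ?A" for W
  proof -
    have W: "finite W" "card W = k"
      using that finite_subset by auto
    have "finite {e. e \<subseteq> W \<and> card e = 2}"
      using W(1) by simp
    then show "card (?B W) = (k choose 2) choose j"
      using n_subsets[OF W(1), of 2] n_subsets[of "{e. e \<subseteq> W \<and> card e = 2}" j] W(2) by simp
    show "finite (?B W)"
      using W by (auto intro: finite_subset[of _ "Pow (Pow W)"])
  qed
  have finite_A: "finite ?A"
    by (rule finite_subset[of _ "Pow {1..n}"]) auto
  have "card (Sigma ?A ?B) = (\<Sum>W\<in>?A. (k choose 2) choose j)"
    using finite_A finite_B card_B by simp
  also have "\<dots> = (n choose k) * ((k choose 2) choose j)"
    using n_subsets[of "{1..n}" k] by simp
  finally show ?thesis
    unfolding eq .
qed

lemma finite_all_pairs: "finite (all_pairs n)"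
  unfolding all_pairs_def by (rule finite_subset[of _ "Pow {1..n}"]) auto

lemma set_pmf_gnp_subset: "E \<in> set_pmf (gnp n p) \<Longrightarrow> E \<subseteq> all_pairs n"
  unfolding gnp_def by auto

lemma subgraphs_kj_eq:
  "E \<subseteq> all_pairs n \<Longrightarrow> subgraphs_kj n E k j = {H \<in> labelled_subgraphs n k j. snd H \<subseteq> E}"
  unfolding subgraphs_kj_def labelled_subgraphs_def all_pairs_def by auto

lemma card_quotient_le: "finite A \<Longrightarrow> card (A // r) \<le> card A"
  unfolding quotient_def by (simp add: UNION_singleton_eq_range card_image_le)

lemma s_count_le_labelled:
  assumes "E \<subseteq> all_pairs n"
  shows "s_count n E k j \<le> card {H \<in> labelled_subgraphs n k j. snd H \<subseteq> E}"
  unfolding s_count_def subgraphs_kj_eq[OF assms]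
  by (rule card_quotient_le) (simp add: finite_labelled_subgraphs)

lemma prob_gnp_superset:
  assumes "F \<subseteq> all_pairs n" "0 \<le> p" "p \<le> 1"
  shows "measure_pmf.prob (gnp n p) {E. F \<subseteq> E} = p ^ card F"
proof -
  have preimage: "(\<lambda>f. {e \<in> all_pairs n. f e}) -` {E. F \<subseteq> E}
      = Pi (all_pairs n) (\<lambda>e. if e \<in> F then {True} else UNIV)"
    using assms by (auto simp: Pi_def)
  have "measure_pmf.prob (gnp n p) {E. F \<subseteq> E}
      = (\<Prod>e\<in>all_pairs n. measure_pmf.prob (bernoulli_pmf p) (if e \<in> F then {True} else UNIV))"
    unfolding gnp_def measure_map_pmf preimage
    by (rule measure_Pi_pmf_Pi[OF finite_all_pairs])
  also have "\<dots> = (\<Prod>e\<in>all_pairs n. if e \<in> F then p else 1)"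
    using assms by (intro prod.cong) (auto simp: measure_pmf_single)
  also have "\<dots> = p ^ card F"
    using assms finite_all_pairs[of n] by (simp add: prod.If_cases Int_absorb1)
  finally show ?thesis .
qed

lemma prob_card_events_ge_le:
  fixes M :: "'a pmf" and A :: "'i \<Rightarrow> 'a set"
  assumes "finite I" "0 < c"
  shows "measure_pmf.prob M {x. c \<le> real (card {i \<in> I. x \<in> A i})}
         \<le> (\<Sum>i\<in>I. measure_pmf.prob M (A i)) / c"
proof -
  let ?N = "\<lambda>x. \<Sum>i\<in>I. indicator (A i) x :: real"
  have count: "real (card {i \<in> I. x \<in> A i}) = ?N x" for x
    using assms by (simp add: indicator_def sum.If_cases Int_def)
  have indicator: "integrable M (indicator (A i) :: 'a \<Rightarrow> real)" for i
    by (simp add: less_top[symmetric])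
  then have "measure_pmf.prob M {x. c \<le> ?N x} \<le> (\<integral>x. ?N x \<partial>M) / c"
    using integral_Markov_inequality_measure[of M ?N UNIV c] assms by (simp add: sum_nonneg)
  also have "(\<integral>x. ?N x \<partial>M) = (\<Sum>i\<in>I. measure_pmf.prob M (A i))"
    using indicator by (simp add: Bochner_Integration.integral_sum)
  finally show ?thesis
    by (simp add: count)
qed

lemma prob_s_count_ge_le:
  assumes "0 \<le> p" "p \<le> 1" "0 < c"
  shows "measure_pmf.prob (gnp n p) {E. c \<le> real (s_count n E k j)}
         \<le> real (n choose k) * real ((k choose 2) choose j) * p ^ j / c"
proof -
  let ?L = "labelled_subgraphs n k j"
  have "measure_pmf.prob (gnp n p) {E. c \<le> real (s_count n E k j)}
        \<le> measure_pmf.prob (gnp n p) {E. c \<le> real (card {H \<in> ?L. E \<in> {E. snd H \<subseteq> E}})}"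
    using s_count_le_labelled[OF set_pmf_gnp_subset]
    by (intro measure_pmf.finite_measure_mono_AE)
       (auto simp: AE_measure_pmf_iff intro: order.trans)
  also have "\<dots> \<le> (\<Sum>H\<in>?L. measure_pmf.prob (gnp n p) {E. snd H \<subseteq> E}) / c"
    by (rule prob_card_events_ge_le[OF finite_labelled_subgraphs assms(3)])
  also have "(\<Sum>H\<in>?L. measure_pmf.prob (gnp n p) {E. snd H \<subseteq> E}) = (\<Sum>H\<in>?L. p ^ j)"
  proof (intro sum.cong refl)
    fix H assume "H \<in> ?L"
    then have "snd H \<subseteq> all_pairs n" "card (snd H) = j"
      by (fastforce simp: labelled_subgraphs_def all_pairs_def)+
    then show "measure_pmf.prob (gnp n p) {E. snd H \<subseteq> E} = p ^ j"
      using prob_gnp_superset assms by metis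
  qed
  finally show ?thesis
    by (simp add: card_labelled_subgraphs)
qed

theorem mainTheorem11:
  fixes d :: real
  assumes "d \<ge> 0"
  shows "\<exists>\<beta>::real. \<forall>(n::nat) (k::nat) (\<delta>::real).
           n \<ge> 1 \<longrightarrow> real n \<ge> d \<longrightarrow> k \<ge> 2 \<longrightarrow>
           \<delta> \<ge> 1 + 1 / ln (real k) \<longrightarrow> \<delta> * real k \<in> \<int> \<longrightarrow>
           measure_pmf.prob (gnp n (d / real n))
             {E. real (s_count n E k (nat \<lfloor>\<delta> * real k\<rfloor>)) \<ge> \<beta> ^ k}
           \<le> 1 / 2 ^ k"
proof (intro exI allI impI)
  fix n k :: nat and \<delta> :: real
  assume n: "n \<ge> 1" "real n \<ge> d" and k: "k \<ge> 2" and \<delta>: "\<delta> \<ge> 1 + 1 / ln (real k)"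
  define j where "j = nat \<lfloor>\<delta> * real k\<rfloor>"
  define \<beta> where "\<beta> = 2 * exp (1 + d / 2)"
  have "1 / ln (real k) > 0"
    using k by simp
  then have "1 \<le> \<delta>"
    using \<delta> by linarith
  then have "real k \<le> \<delta> * real k"
    using mult_right_mono[of 1 \<delta> "real k"] by simp
  then have "k \<le> j"
    unfolding j_def by (rule le_nat_floor)
  then have moment: "real (n choose k) * real ((k choose 2) choose j) * (d / real n) ^ j
      \<le> exp (real k * (1 + d / 2))"
    using first_moment_le_exp k assms by simp
  have p: "0 \<le> d / real n" "d / real n \<le> 1"
    using assms n by auto
  have "measure_pmf.prob (gnp n (d / real n)) {E. \<beta> ^ k \<le> real (s_count n E k j)}
        \<le> real (n choose k) * real ((k choose 2) choose j) * (d / real n) ^ j / \<beta> ^ k"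
    using prob_s_count_ge_le[OF p] by (simp add: \<beta>_def)
  also have "\<dots> \<le> exp (real k * (1 + d / 2)) / \<beta> ^ k"
    using moment by (simp add: \<beta>_def divide_right_mono)
  also have "\<dots> = 1 / 2 ^ k"
    by (simp add: \<beta>_def power_mult_distrib exp_of_nat_mult)
  finally show "measure_pmf.prob (gnp n (d / real n)) {E. real (s_count n E k j) \<ge> \<beta> ^ k} \<le> 1 / 2 ^ k" .
qed

end
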